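(* Let $K$ be a commutative ring of characteristic $0$ with unit and $M$ a multiplicative $\mathbb{R}$-vector subspace of $\mathcal{H}^{>0}$. Let $F=G(m_0,\dots,m_k)$ be an $M$-generalized power series over $K$ with generating monomials $m_0,\dots,m_k$, and assume that the $m_i$ are pairwise comparable. Then $F$ has $\langle m_0,\dots,m_k\rangle^\times$-natural support, i.e. for every $p\in\langle m_0,\dots,m_k\rangle^\times$ the set $\operatorname{supp}(F)\cap(p,+\infty)$ is finite.
   Context: $\mathcal{H}$ is the Hardy field of germs at $+\infty$ of unary functions definable in $\mathbb{R}_{\mathrm{an},\exp}$, totally ordered by eventual comparison. $\langle m_0,\dots,m_k\rangle^\times$ is the multiplicative $\mathbb{R}$-vector space generated by $m_0,\dots,m_k$, i.e. $\{m_0^{r_0}\cdots m_k^{r_k}:r_i\in\mathbb{R}\}$. Germs $f,g$ are comparable if there are $r,s>0$ with $|f|^r<|g|<|f|^s$ eventually. An $M$-generalized power series over $K$ with generating monomials $m_0,\dots,m_k$ is a series $G(m_0,\dots,m_k)=\sum_{n\in M}\big(\sum_{\alpha\in\operatorname{supp}G,\,m^\alpha=n}a_\alpha\big)n$ in the ring $K((M))$ of formal series with anti-well-ordered support, where $m_0,\dots,m_k\in M$ are small (tend to $0$) and $G=\sum_\alpha a_\alpha X^\alpha$ is a generalized power series over $K$ in $X_0,\dots,X_k$ (support in a product of well-ordered subsets of $[0,\infty)$) with natural support (for each $a>0$ and each $i$, $[0,a)\cap\Pi_i(\operatorname{supp}G)$ is finite). $\operatorname{supp}(F)$ is the set of $n\in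 M$ with nonzero coefficient. *)

theory Defs
  imports Complex_Main
begin

(* Germs at +infinity are represented by functions real => real; two functions
   represent the same germ iff they agree eventually (filter at_top). *)

definition germ_of :: "(real \<Rightarrow> real) \<Rightarrow> (real \<Rightarrow> real) set" where
  "germ_of f = {g. \<forall>\<^sub>F x in at_top. g x = f x}"

(* Hardy field (of germs at +infinity), given by the set of all its representatives *)
definition hardy_field :: "(real \<Rightarrow> real) set \<Rightarrow> bool" where
  "hardy_field H \<longleftrightarrow>
     (\<forall>c. (\<lambda>_. c) \<in> H) \<and>
     (\<forall>f\<in>H. \<forall>g\<in>H. (\<lambda>x. f x + g x) \<in> H \<and> (\<lambda>x. f x * g x) \<in> H) \<and>
     (\<forall>f\<in>H. (\<lambda>x. - f x) \<in> H) \<and>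
     (\<forall>f\<in>H. \<not> (\<forall>\<^sub>F x in at_top. f x = 0) \<longrightarrow> (\<exists>g\<in>H. \<forall>\<^sub>F x in at_top. f x * g x = 1)) \<and>
     (\<forall>f\<in>H. \<exists>g\<in>H. \<forall>\<^sub>F x in at_top. (f has_real_derivative g x) (at x))"

definition mult_R_subspace_pos :: "(real \<Rightarrow> real) set \<Rightarrow> (real \<Rightarrow> real) set \<Rightarrow> bool" where
  "mult_R_subspace_pos H M \<longleftrightarrow>
     M \<subseteq> H \<and> (\<forall>f\<in>M. \<forall>\<^sub>F x in at_top. f x > 0) \<and>
     (\<lambda>_. 1) \<in> M \<and>
     (\<forall>f\<in>M. \<forall>g\<in>M. (\<lambda>x. f x * g x) \<in> M) \<and>
     (\<forall>f\<in>M. \<forall>r::real. (\<lambda>x. f x powr r) \<in> M)"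

definition germ_less :: "(real \<Rightarrow> real) \<Rightarrow> (real \<Rightarrow> real) \<Rightarrow> bool" where
  "germ_less f g \<longleftrightarrow> (\<forall>\<^sub>F x in at_top. f x < g x)"

definition comparable :: "(real \<Rightarrow> real) \<Rightarrow> (real \<Rightarrow> real) \<Rightarrow> bool" where
  "comparable f g \<longleftrightarrow> (\<exists>r s. r > 0 \<and> s > 0 \<and>
      (\<forall>\<^sub>F x in at_top. \<bar>f x\<bar> powr r < \<bar>g x\<bar> \<and> \<bar>g x\<bar> < \<bar>f x\<bar> powr s))"

definition monom :: "nat \<Rightarrow> (nat \<Rightarrow> real \<Rightarrow> real) \<Rightarrow> (nat \<Rightarrow> real) \<Rightarrow> real \<Rightarrow> real" where
  "monom k m \<alpha> = (\<lambda>x. \<Prod>i\<le>k. m i x powr \<alpha> i)"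

definition mult_span :: "nat \<Rightarrow> (nat \<Rightarrow> real \<Rightarrow> real) \<Rightarrow> (real \<Rightarrow> real) set" where
  "mult_span k m = {p. \<exists>r. \<forall>\<^sub>F x in at_top. p x = monom k m r x}"

(* generalized power series over K in X_0..X_k: a coefficient function on exponent
   vectors alpha : nat => real (coordinates > k are 0) *)
definition gps_supp :: "((nat \<Rightarrow> real) \<Rightarrow> 'K::zero) \<Rightarrow> (nat \<Rightarrow> real) set" where
  "gps_supp a = {\<alpha>. a \<alpha> \<noteq> 0}"

definition well_ordered_real :: "real set \<Rightarrow> bool" where
  "well_ordered_real W \<longleftrightarrow> (\<forall>S. S \<subseteq> W \<and> S \<noteq> {} \<longrightarrow> (\<exists>s\<in>S. \<forall>t\<in>S. s \<le> t))"

definition generalized_power_series :: "nat \<Rightarrow> ((nat \<Rightarrow> real) \<Rightarrow> 'K::zero) \<Rightarrow> bool" where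
  "generalized_power_series k a \<longleftrightarrow>
     (\<forall>\<alpha>\<in>gps_supp a. \<forall>i>k. \<alpha> i = 0) \<and>
     (\<exists>W. (\<forall>i\<le>k. W i \<subseteq> {0..} \<and> well_ordered_real (W i)) \<and>
          (\<forall>\<alpha>\<in>gps_supp a. \<forall>i\<le>k. \<alpha> i \<in> W i))"

definition natural_support :: "nat \<Rightarrow> ((nat \<Rightarrow> real) \<Rightarrow> 'K::zero) \<Rightarrow> bool" where
  "natural_support k a \<longleftrightarrow>
     (\<forall>b::real. b > 0 \<longrightarrow> (\<forall>i\<le>k. finite ({0..<b} \<inter> (\<lambda>\<alpha>. \<alpha> i) ` gps_supp a)))"

(* coefficient of the monomial n in the M-generalized power series G(m_0,...,m_k) *)
definition Mgps_coeff :: "nat \<Rightarrow> ((nat \<Rightarrow> real) \<Rightarrow> 'K::comm_ring_1) \<Rightarrow> (nat \<Rightarrow> real \<Rightarrow> real)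
     \<Rightarrow> (real \<Rightarrow> real) \<Rightarrow> 'K" where
  "Mgps_coeff k a m n =
     (\<Sum>\<alpha>\<in>{\<alpha>\<in>gps_supp a. \<forall>\<^sub>F x in at_top. monom k m \<alpha> x = n x}. a \<alpha>)"

definition Mgps_supp :: "(real \<Rightarrow> real) set \<Rightarrow> nat \<Rightarrow> ((nat \<Rightarrow> real) \<Rightarrow> 'K::comm_ring_1)
     \<Rightarrow> (nat \<Rightarrow> real \<Rightarrow> real) \<Rightarrow> (real \<Rightarrow> real) set set" where
  "Mgps_supp M k a m = germ_of ` {n\<in>M. Mgps_coeff k a m n \<noteq> 0}"

end

theory Submission
  imports Defs "HOL-Library.FuncSet"
begin

text \<open>Pass to the log scale \<open>\<ell>\<^sub>i = - ln m\<^sub>i\<close>, where monomials become linear forms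
  \<open>\<Sum>\<^sub>i \<alpha>\<^sub>i \<ell>\<^sub>i\<close> in the exponents. Comparability of the \<open>m\<^sub>i\<close> makes all \<open>\<ell>\<^sub>i\<close>
  eventually within a common factor \<open>C\<close> of each other, and \<open>\<ell>\<^sub>i > 0\<close> since \<open>m\<^sub>i \<rightarrow> 0\<close>.
  If a support monomial \<open>m\<^sup>\<alpha>\<close> lies above \<open>p = m\<^sup>r\<close>, then at a single large point
  \<open>\<alpha>\<^sub>j \<ell>\<^sub>j \<le> \<Sum>\<^sub>i \<alpha>\<^sub>i \<ell>\<^sub>i < \<Sum>\<^sub>i r\<^sub>i \<ell>\<^sub>i \<le> C (\<Sum>\<^sub>i \<bar>r\<^sub>i\<bar>) \<ell>\<^sub>j\<close>, so every exponent
  \<open>\<alpha>\<^sub>j\<close> is bounded by \<open>C \<Sum>\<^sub>i \<bar>r\<^sub>i\<bar>\<close>. By natural support only finitely many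
  exponent vectors of \<open>G\<close> satisfy such a bound. Neither the Hardy field nor the
  coefficient ring plays any role beyond this.\<close>

lemma germ_of_cong:
  assumes "\<forall>\<^sub>F x in at_top. f x = g x"
  shows "germ_of f = germ_of g"
  unfolding germ_of_def
proof (intro Collect_cong iffI)
  fix h assume "\<forall>\<^sub>F x in at_top. h x = f x"
  with assms show "\<forall>\<^sub>F x in at_top. h x = g x" by eventually_elim simp
next
  fix h assume "\<forall>\<^sub>F x in at_top. h x = g x"
  with assms show "\<forall>\<^sub>F x in at_top. h x = f x" by eventually_elim simp
qed

lemma eventually_in_unit_interval:
  fixes m :: "nat \<Rightarrow> real \<Rightarrow> real"
  assumes "mult_R_subspace_pos H M" "\<forall>i\<le>k. m i \<in> M \<and> (m i \<longlongrightarrow> 0) at_top"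
  shows "\<forall>\<^sub>F x in at_top. \<forall>i\<le>k. 0 < m i x \<and> m i x < 1"
proof -
  have "\<forall>\<^sub>F x in at_top. 0 < m i x \<and> m i x < 1" if "i \<le> k" for i
  proof (rule eventually_conj)
    show "\<forall>\<^sub>F x in at_top. 0 < m i x"
      using assms that unfolding mult_R_subspace_pos_def by blast
    show "\<forall>\<^sub>F x in at_top. m i x < 1"
      using assms(2) that by (intro order_tendstoD(2)[of "m i" 0]) auto
  qed
  then have "\<forall>\<^sub>F x in at_top. \<forall>i\<in>{..k}. 0 < m i x \<and> m i x < 1"
    by (intro eventually_ball_finite) auto
  then show ?thesis by eventually_elim auto
qed

lemma eventually_uniform_bound:
  fixes P :: "'i \<Rightarrow> real \<Rightarrow> 'a \<Rightarrow> bool"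
  assumes "finite I"
    and "\<And>i. i \<in> I \<Longrightarrow> \<exists>C. eventually (P i C) F"
    and mono: "\<And>i C C' x. P i C x \<Longrightarrow> C \<le> C' \<Longrightarrow> P i C' x"
  shows "\<exists>C. eventually (\<lambda>x. \<forall>i\<in>I. P i C x) F"
  using assms(1,2)
proof (induction I rule: finite_induct)
  case empty
  then show ?case by simp
next
  case (insert i I)
  then obtain C C' where "eventually (P i C) F" "eventually (\<lambda>x. \<forall>i\<in>I. P i C' x) F"
    by blast
  then have "eventually (\<lambda>x. \<forall>j\<in>insert i I. P j (max C C') x) F"
    by eventually_elim (auto intro: mono)
  then show ?case by blast
qed

lemma comparable_neg_ln_le:
  assumes "comparable f g" "\<forall>\<^sub>F x in at_top. 0 < f x" "\<forall>\<^sub>F x in at_top. 0 < g x"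
  shows "\<exists>C. \<forall>\<^sub>F x in at_top. - ln (g x) \<le> C * - ln (f x)"
proof -
  obtain r s where "\<forall>\<^sub>F x in at_top. \<bar>f x\<bar> powr r < \<bar>g x\<bar> \<and> \<bar>g x\<bar> < \<bar>f x\<bar> powr s"
    using assms(1) unfolding comparable_def by blast
  with assms(2,3) have "\<forall>\<^sub>F x in at_top. - ln (g x) \<le> r * - ln (f x)"
  proof eventually_elim
    case (elim x)
    then have "ln (f x powr r) < ln (g x)" by (subst ln_less_cancel_iff) auto
    then show ?case by simp
  qed
  then show ?thesis by blast
qed

lemma pairwise_comparable_neg_ln_le:
  fixes m :: "nat \<Rightarrow> real \<Rightarrow> real"
  assumes unit: "\<forall>\<^sub>F x in at_top. \<forall>i\<le>k. 0 < m i x \<and> m i x < 1"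
    and cmp: "\<forall>i\<le>k. \<forall>j\<le>k. i \<noteq> j \<longrightarrow> comparable (m i) (m j)"
  shows "\<exists>C. \<forall>\<^sub>F x in at_top. \<forall>i\<le>k. \<forall>j\<le>k. - ln (m i x) \<le> C * - ln (m j x)"
proof -
  \<comment> \<open>The conjunct \<open>0 \<le> - ln (m j x)\<close> makes \<open>P\<close> monotone in \<open>C\<close>.\<close>
  define P where "P ij C x \<longleftrightarrow> 0 \<le> - ln (m (snd ij) x) \<and>
    - ln (m (fst ij) x) \<le> C * - ln (m (snd ij) x)" for ij C x
  have "\<exists>C. \<forall>\<^sub>F x in at_top. P (i, j) C x" if ij: "i \<le> k" "j \<le> k" for i j
  proof -
    have pos: "\<forall>\<^sub>F x in at_top. 0 < m i x" "\<forall>\<^sub>F x in at_top. 0 < m j x"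
      using unit ij by (auto elim: eventually_mono)
    obtain C where "\<forall>\<^sub>F x in at_top. - ln (m i x) \<le> C * - ln (m j x)"
    proof (cases "i = j")
      case True
      then show ?thesis using that[of 1] by simp
    next
      case False
      then show ?thesis using that comparable_neg_ln_le[OF _ pos(2,1)] cmp ij by blast
    qed
    with unit have "\<forall>\<^sub>F x in at_top. P (i, j) C x"
      unfolding P_def by eventually_elim (use ij in auto)
    then show ?thesis ..
  qed
  moreover have "P ij C' x" if "P ij C x" "C \<le> C'" for ij C C' x
    using that unfolding P_def by (meson mult_right_mono order_trans)
  ultimately obtain C where "\<forall>\<^sub>F x in at_top. \<forall>ij\<in>{..k} \<times> {..k}. P ij C x"
    using eventually_uniform_bound[of "{..k} \<times> {..k}" P at_top] by fastforce
  then have "\<forall>\<^sub>F x in at_top. \<forall>i\<le>k. \<forall>j\<le>k. - ln (m i x) \<le> C * - ln (m j x)"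
    by eventually_elim (auto simp: P_def)
  then show ?thesis ..
qed

lemma exponent_bound_from_log_comparison:
  fixes l \<alpha> r :: "nat \<Rightarrow> real"
  assumes \<alpha>: "\<forall>i\<le>k. 0 \<le> \<alpha> i"
    and l: "\<forall>i\<le>k. 0 \<le> l i" "\<forall>i\<le>k. l i \<le> C * l j"
    and j: "j \<le> k" "0 < l j"
    and less: "(\<Sum>i\<le>k. \<alpha> i * l i) < (\<Sum>i\<le>k. r i * l i)"
  shows "\<alpha> j < C * (\<Sum>i\<le>k. \<bar>r i\<bar>)"
proof -
  have "\<alpha> j * l j \<le> (\<Sum>i\<le>k. \<alpha> i * l i)"
    using \<alpha> l(1) j by (intro member_le_sum) auto
  also note less
  also have "(\<Sum>i\<le>k. r i * l i) \<le> (\<Sum>i\<le>k. \<bar>r i\<bar> * (C * l j))"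
  proof (rule sum_mono)
    fix i assume "i \<in> {..k}"
    then have "r i * l i \<le> \<bar>r i\<bar> * l i" "\<bar>r i\<bar> * l i \<le> \<bar>r i\<bar> * (C * l j)"
      using l by (auto intro: mult_right_mono mult_left_mono)
    then show "r i * l i \<le> \<bar>r i\<bar> * (C * l j)" by linarith
  qed
  also have "\<dots> = (\<Sum>i\<le>k. \<bar>r i\<bar>) * (C * l j)"
    by (rule sum_distrib_right[symmetric])
  finally have "\<alpha> j * l j < C * (\<Sum>i\<le>k. \<bar>r i\<bar>) * l j"
    by (simp only: mult_ac)
  then show ?thesis using j(2) by simp
qed

lemma monom_pos:
  assumes "\<forall>i\<le>k. 0 < m i x"
  shows "0 < monom k m \<alpha> x"
  using assms unfolding monom_def by (auto intro!: prod_pos)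

lemma ln_monom:
  assumes "\<forall>i\<le>k. 0 < m i x"
  shows "ln (monom k m \<alpha> x) = (\<Sum>i\<le>k. \<alpha> i * ln (m i x))"
  using assms unfolding monom_def by (subst ln_prod) auto

lemma monom_less_iff_neg_ln:
  assumes "\<forall>i\<le>k. 0 < m i x"
  shows "monom k m r x < monom k m \<alpha> x \<longleftrightarrow>
    (\<Sum>i\<le>k. \<alpha> i * - ln (m i x)) < (\<Sum>i\<le>k. r i * - ln (m i x))"
  using assms monom_pos[of k m x r] monom_pos[of k m x \<alpha>]
  by (simp add: ln_less_cancel_iff[symmetric] ln_monom sum_negf del: ln_less_cancel_iff)

lemma exponent_bound_above_monom:
  fixes m :: "nat \<Rightarrow> real \<Rightarrow> real"
  assumes unit: "\<forall>\<^sub>F x in at_top. \<forall>i\<le>k. 0 < m i x \<and> m i x < 1"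
    and C: "\<forall>\<^sub>F x in at_top. \<forall>i\<le>k. \<forall>j\<le>k. - ln (m i x) \<le> C * - ln (m j x)"
    and above: "\<forall>\<^sub>F x in at_top. monom k m r x < monom k m \<alpha> x"
    and \<alpha>: "\<forall>i\<le>k. 0 \<le> \<alpha> i"
    and j: "j \<le> k"
  shows "\<alpha> j < C * (\<Sum>i\<le>k. \<bar>r i\<bar>)"
proof -
  obtain x where x: "\<forall>i\<le>k. 0 < m i x \<and> m i x < 1"
    "\<forall>i\<le>k. \<forall>j\<le>k. - ln (m i x) \<le> C * - ln (m j x)" "monom k m r x < monom k m \<alpha> x"
    using eventually_happens'[OF _ eventually_conj[OF unit eventually_conj[OF C above]]] by auto
  show ?thesis
  proof (rule exponent_bound_from_log_comparison[where l = "\<lambda>i. - ln (m i x)"])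
    show "(\<Sum>i\<le>k. \<alpha> i * - ln (m i x)) < (\<Sum>i\<le>k. r i * - ln (m i x))"
      using x(1,3) monom_less_iff_neg_ln[of k m x r \<alpha>] by simp
  qed (use x(1,2) \<alpha> j in auto)
qed

lemma gps_supp_nonneg:
  assumes "generalized_power_series k a" "\<alpha> \<in> gps_supp a" "i \<le> k"
  shows "0 \<le> \<alpha> i"
proof -
  obtain W where "\<forall>i\<le>k. W i \<subseteq> {0..}" "\<forall>\<alpha>\<in>gps_supp a. \<forall>i\<le>k. \<alpha> i \<in> W i"
    using assms(1) unfolding generalized_power_series_def by blast
  with assms(2,3) show ?thesis by auto
qed

lemma gps_supp_vanish:
  assumes "generalized_power_series k a" "\<alpha> \<in> gps_supp a" "k < i"
  shows "\<alpha> i = 0"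
  using assms unfolding generalized_power_series_def by blast

lemma finite_bounded_exponents:
  assumes "generalized_power_series k a" "natural_support k a"
  shows "finite {\<alpha> \<in> gps_supp a. \<forall>i\<le>k. \<alpha> i < B}"
proof -
  let ?A = "{\<alpha> \<in> gps_supp a. \<forall>i\<le>k. \<alpha> i < B}"
  define T where "T i = {0..<max B 1} \<inter> (\<lambda>\<alpha>. \<alpha> i) ` gps_supp a" for i
  have "inj_on (\<lambda>\<alpha>. restrict \<alpha> {..k}) ?A"
  proof (rule inj_onI, rule ext)
    fix \<alpha> \<beta> i assume "\<alpha> \<in> ?A" "\<beta> \<in> ?A" and eq: "restrict \<alpha> {..k} = restrict \<beta> {..k}"
    have "restrict \<alpha> {..k} i = restrict \<beta> {..k} i" by (simp only: eq)
    then show "\<alpha> i = \<beta> i"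
      using gps_supp_vanish[OF assms(1), of \<alpha> i] gps_supp_vanish[OF assms(1), of \<beta> i]
        \<open>\<alpha> \<in> ?A\<close> \<open>\<beta> \<in> ?A\<close>
      by (cases "i \<le> k") auto
  qed
  moreover have "(\<lambda>\<alpha>. restrict \<alpha> {..k}) ` ?A \<subseteq> (\<Pi>\<^sub>E i\<in>{..k}. T i)"
  proof (rule image_subsetI, unfold restrict_PiE_iff, rule ballI)
    fix \<alpha> i assume "\<alpha> \<in> ?A" "i \<in> {..k}"
    then show "\<alpha> i \<in> T i" using gps_supp_nonneg[OF assms(1), of \<alpha> i] unfolding T_def by auto
  qed
  moreover have "finite (\<Pi>\<^sub>E i\<in>{..k}. T i)"
  proof (rule finite_PiE)
    fix i assume "i \<in> {..k}"
    then show "finite (T i)"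
      using assms(2) unfolding natural_support_def T_def by simp
  qed simp
  ultimately show ?thesis by (meson finite_imageD finite_subset)
qed

lemma Mgps_supp_above_subset:
  "{g \<in> Mgps_supp M k a m. \<exists>n\<in>g. germ_less p n} \<subseteq>
     (\<lambda>\<alpha>. germ_of (monom k m \<alpha>)) ` {\<alpha> \<in> gps_supp a. \<forall>\<^sub>F x in at_top. p x < monom k m \<alpha> x}"
proof
  fix g assume "g \<in> {g \<in> Mgps_supp M k a m. \<exists>n\<in>g. germ_less p n}"
  then obtain n n' where n: "Mgps_coeff k a m n \<noteq> 0" "g = germ_of n"
    and n': "n' \<in> g" "germ_less p n'"
    unfolding Mgps_supp_def by auto
  obtain \<alpha> where \<alpha>: "\<alpha> \<in> gps_supp a" "\<forall>\<^sub>F x in at_top. monom k m \<alpha> x = n x"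
    using n(1) unfolding Mgps_coeff_def by (metis (no_types, lifting) empty_Collect_eq sum.empty)
  have "\<forall>\<^sub>F x in at_top. n' x = n x" using n' n(2) unfolding germ_of_def by auto
  with n'(2) \<alpha>(2) have "\<forall>\<^sub>F x in at_top. p x < monom k m \<alpha> x"
    unfolding germ_less_def by eventually_elim simp
  moreover have "g = germ_of (monom k m \<alpha>)"
    using n(2) germ_of_cong[OF \<alpha>(2)] by simp
  ultimately show "g \<in> (\<lambda>\<alpha>. germ_of (monom k m \<alpha>)) `
      {\<alpha> \<in> gps_supp a. \<forall>\<^sub>F x in at_top. p x < monom k m \<alpha> x}"
    using \<alpha>(1) by blast
qed

theorem lemma5p4:
  fixes H M :: "(real \<Rightarrow> real) set"
    and k :: nat
    and m :: "nat \<Rightarrow> real \<Rightarrow> real"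
    and a :: "(nat \<Rightarrow> real) \<Rightarrow> 'K::{comm_ring_1, ring_char_0}"
  assumes "hardy_field H"
    and "mult_R_subspace_pos H M"
    and "\<forall>i\<le>k. m i \<in> M \<and> (m i \<longlongrightarrow> 0) at_top"
    and "generalized_power_series k a"
    and "natural_support k a"
    and "\<forall>i\<le>k. \<forall>j\<le>k. i \<noteq> j \<longrightarrow> comparable (m i) (m j)"
  shows "\<forall>p\<in>mult_span k m.
           finite {g \<in> Mgps_supp M k a m. \<exists>n\<in>g. germ_less p n}"
proof
  fix p assume "p \<in> mult_span k m"
  then obtain r where p: "\<forall>\<^sub>F x in at_top. p x = monom k m r x"
    unfolding mult_span_def by blast
  have unit: "\<forall>\<^sub>F x in at_top. \<forall>i\<le>k. 0 < m i x \<and> m i x < 1"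
    using eventually_in_unit_interval[OF assms(2,3)] .
  obtain C where C: "\<forall>\<^sub>F x in at_top. \<forall>i\<le>k. \<forall>j\<le>k. - ln (m i x) \<le> C * - ln (m j x)"
    using pairwise_comparable_neg_ln_le[OF unit assms(6)] by blast
  let ?A = "{\<alpha> \<in> gps_supp a. \<forall>\<^sub>F x in at_top. p x < monom k m \<alpha> x}"
  have "?A \<subseteq> {\<alpha> \<in> gps_supp a. \<forall>i\<le>k. \<alpha> i < C * (\<Sum>i\<le>k. \<bar>r i\<bar>)}"
  proof (intro subsetI CollectI conjI allI impI)
    fix \<alpha> j assume "\<alpha> \<in> ?A" "j \<le> k"
    then have \<alpha>: "\<alpha> \<in> gps_supp a" and above: "\<forall>\<^sub>F x in at_top. p x < monom k m \<alpha> x" by auto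
    from above p have "\<forall>\<^sub>F x in at_top. monom k m r x < monom k m \<alpha> x"
      by eventually_elim simp
    with \<alpha> \<open>j \<le> k\<close> show "\<alpha> j < C * (\<Sum>i\<le>k. \<bar>r i\<bar>)"
      by (intro exponent_bound_above_monom[OF unit C] allI impI gps_supp_nonneg[OF assms(4)])
  qed (simp)
  then have "finite ?A" by (rule finite_subset) (rule finite_bounded_exponents[OF assms(4,5)])
  then show "finite {g \<in> Mgps_supp M k a m. \<exists>n\<in>g. germ_less p n}"
    by (intro finite_subset[OF Mgps_supp_above_subset] finite_imageI)
qed

end
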